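(* Let $k \geq 2$ and let $G_1, \dots, G_k$ be finite simple Class 1 graphs. Then for each $i$ there is a finite simple graph $G_i^*$ obtained from $G_i$ by adding extra vertices and edges, such that $G_i^*$ is $\Delta(G_i)$-regular and Class 1, and such that whenever two edges of $G_1 \square \cdots \square G_k$ are at distance at least $3$ in $G_1 \square \cdots \square G_k$, they are also at distance at least $3$ in $G_1^* \square \cdots \square G_k^*$.
   Context: A graph $G$ is Class 1 if its chromatic index $\chi'(G)$ equals its maximum degree $\Delta(G)$. The Cartesian product $G \square H$ has vertex set $V(G)\times V(H)$, with $(u_1,u_2)$ adjacent to $(v_1,v_2)$ iff either $u_1=v_1$ and $u_2v_2 \in E(H)$, or $u_2=v_2$ and $u_1v_1\in E(G)$; iterated products are defined accordingly. The distance between vertices is the length of a shortest path between them (infinite if none), and the distance between edges $xy$ and $zw$ is $\min\{d(x,z),d(x,w),d(y,z),d(y,w)\}$. *)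

theory Defs
  imports Main "HOL-Library.Extended_Nat"
begin

type_synonym 'a graph = "'a set \<times> 'a set set"

definition verts :: "'a graph \<Rightarrow> 'a set" where "verts G = fst G"
definition edges :: "'a graph \<Rightarrow> 'a set set" where "edges G = snd G"

definition simple_graph :: "'a graph \<Rightarrow> bool" where
  "simple_graph G \<longleftrightarrow> finite (verts G) \<and>
     (\<forall>e\<in>edges G. \<exists>u v. u \<noteq> v \<and> u \<in> verts G \<and> v \<in> verts G \<and> e = {u, v})"

definition degree :: "'a graph \<Rightarrow> 'a \<Rightarrow> nat" where
  "degree G v = card {e \<in> edges G. v \<in> e}"

text \<open>Maximum degree; 0 for the graph with no vertices.\<close>
definition max_degree :: "'a graph \<Rightarrow> nat" where
  "max_degree G = Sup (degree G ` verts G)"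

definition regular :: "'a graph \<Rightarrow> nat \<Rightarrow> bool" where
  "regular G d \<longleftrightarrow> (\<forall>v\<in>verts G. degree G v = d)"

definition proper_edge_colouring :: "'a graph \<Rightarrow> nat \<Rightarrow> ('a set \<Rightarrow> nat) \<Rightarrow> bool" where
  "proper_edge_colouring G n c \<longleftrightarrow> (\<forall>e\<in>edges G. c e < n) \<and>
     (\<forall>e\<in>edges G. \<forall>f\<in>edges G. e \<noteq> f \<and> e \<inter> f \<noteq> {} \<longrightarrow> c e \<noteq> c f)"

definition chromatic_index :: "'a graph \<Rightarrow> nat" where
  "chromatic_index G = (LEAST n. \<exists>c. proper_edge_colouring G n c)"

definition class1 :: "'a graph \<Rightarrow> bool" where
  "class1 G \<longleftrightarrow> chromatic_index G = max_degree G"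

definition subgraph :: "'a graph \<Rightarrow> 'a graph \<Rightarrow> bool" where
  "subgraph H G \<longleftrightarrow> verts H \<subseteq> verts G \<and> edges H \<subseteq> edges G"

definition cart_prod :: "nat \<Rightarrow> (nat \<Rightarrow> 'a graph) \<Rightarrow> 'a list graph" where
  "cart_prod k G =
    ({xs. length xs = k \<and> (\<forall>i<k. xs ! i \<in> verts (G i))},
     {{xs, ys} | xs ys. length xs = k \<and> length ys = k \<and>
        (\<forall>i<k. xs ! i \<in> verts (G i)) \<and> (\<forall>i<k. ys ! i \<in> verts (G i)) \<and>
        (\<exists>i<k. {xs ! i, ys ! i} \<in> edges (G i) \<and> (\<forall>j<k. j \<noteq> i \<longrightarrow> xs ! j = ys ! j))})"

definition walk_of_length :: "'a graph \<Rightarrow> 'a \<Rightarrow> 'a \<Rightarrow> nat \<Rightarrow> bool" where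
  "walk_of_length G x y n \<longleftrightarrow>
     (\<exists>p :: nat \<Rightarrow> 'a. p 0 = x \<and> p n = y \<and> (\<forall>i<n. {p i, p (Suc i)} \<in> edges G))"

text \<open>Distance (infinite if no path).\<close>
definition dist :: "'a graph \<Rightarrow> 'a \<Rightarrow> 'a \<Rightarrow> enat" where
  "dist G x y = Inf {enat n | n. walk_of_length G x y n}"

definition edge_dist :: "'a graph \<Rightarrow> 'a set \<Rightarrow> 'a set \<Rightarrow> enat" where
  "edge_dist G e f = Inf {dist G x z | x z. x \<in> e \<and> z \<in> f}"

end

theory Submission
  imports Defs
begin

text \<open>
  Colour \<open>G\<close> properly with \<open>\<Delta> = \<Delta>(G)\<close> colours, take \<open>2^\<Delta>\<close> copies of \<open>G\<close> indexed by the vertices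
  of the \<open>\<Delta>\<close>-cube, and whenever colour \<open>a\<close> is missing at \<open>v\<close>, join the copies of \<open>v\<close> in copies
  \<open>s\<close> and \<open>s XOR 2^a\<close> by an edge of colour \<open>a\<close>. Every vertex of the result \<open>G\<^sup>*\<close> then sees every
  colour exactly once, so \<open>G\<^sup>*\<close> is \<open>\<Delta>\<close>-regular and Class 1, and it contains \<open>G\<close> as copy 0.
  Forgetting the copy index maps every edge of \<open>G\<^sup>*\<close> to an edge of \<open>G\<close> or to a single vertex and
  fixes \<open>G\<close>. Applied coordinatewise, this map sends walks in \<open>G\<^sub>1\<^sup>* \<box> \<dots> \<box> G\<^sub>k\<^sup>*\<close> to walks in
  \<open>G\<^sub>1 \<box> \<dots> \<box> G\<^sub>k\<close> that are no longer, and it fixes the vertices of the latter product; hence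
  distances between edges of \<open>G\<^sub>1 \<box> \<dots> \<box> G\<^sub>k\<close> can only grow.
\<close>

unbundle bit_operations_syntax

section \<open>Edge colourings\<close>

lemma edge_subset_verts: "simple_graph G \<Longrightarrow> e \<in> edges G \<Longrightarrow> e \<subseteq> verts G"
  unfolding simple_graph_def by fastforce

lemma singleton_not_edge:
  assumes "simple_graph G"
  shows "{v} \<notin> edges G"
proof
  assume "{v} \<in> edges G"
  then obtain u w where "u \<noteq> w" "{v} = {u, w}" using assms unfolding simple_graph_def by blast
  then show False by (metis insertCI singletonD)
qed

lemma finite_edges: "simple_graph G \<Longrightarrow> finite (edges G)"
  by (meson Pow_iff edge_subset_verts finite_Pow_iff rev_finite_subset simple_graph_def subsetI)

lemma chromatic_index_le: "proper_edge_colouring G n c \<Longrightarrow> chromatic_index G \<le> n"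
  unfolding chromatic_index_def by (blast intro: Least_le)

lemma proper_edge_colouring_chromatic_index:
  assumes "simple_graph G"
  obtains c where "proper_edge_colouring G (chromatic_index G) c"
proof -
  obtain c where c: "bij_betw c (edges G) {0..<card (edges G)}"
    using ex_bij_betw_finite_nat[OF finite_edges[OF assms]] by blast
  then have "proper_edge_colouring G (card (edges G)) c"
    unfolding proper_edge_colouring_def bij_betw_def inj_on_def by fastforce
  then have "\<exists>n c. proper_edge_colouring G n c" by blast
  then have "\<exists>c. proper_edge_colouring G (chromatic_index G) c"
    unfolding chromatic_index_def by (rule LeastI_ex)
  with that show thesis by blast
qed

lemma inj_on_edges_at:
  "proper_edge_colouring G n c \<Longrightarrow> inj_on c {e \<in> edges G. v \<in> e}"
  unfolding proper_edge_colouring_def inj_on_def by blast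

lemma degree_le_colours: "proper_edge_colouring G n c \<Longrightarrow> degree G v \<le> n"
proof -
  assume c: "proper_edge_colouring G n c"
  have "card {e \<in> edges G. v \<in> e} \<le> card {..<n}"
    by (rule card_inj_on_le[OF inj_on_edges_at[OF c]]) (use c in \<open>auto simp: proper_edge_colouring_def\<close>)
  then show ?thesis unfolding degree_def by simp
qed

lemma degree_eq_colours:
  assumes "proper_edge_colouring G n c" "\<forall>a<n. \<exists>e\<in>edges G. v \<in> e \<and> c e = a"
  shows "degree G v = n"
proof -
  have "c ` {e \<in> edges G. v \<in> e} = {..<n}"
    using assms unfolding proper_edge_colouring_def by fastforce
  then have "bij_betw c {e \<in> edges G. v \<in> e} {..<n}"
    unfolding bij_betw_def using inj_on_edges_at[OF assms(1)] by blast
  then show ?thesis unfolding degree_def by (simp add: bij_betw_same_card)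
qed

lemma max_degree_regular: "regular G d \<Longrightarrow> verts G \<noteq> {} \<Longrightarrow> max_degree G = d"
proof -
  assume "regular G d" "verts G \<noteq> {}"
  then have "degree G ` verts G = {d}" unfolding regular_def by auto
  then show ?thesis unfolding max_degree_def by simp
qed

lemma class1_regular_colourable:
  assumes G: "simple_graph G" and "regular G d" and "proper_edge_colouring G d c"
  shows "class1 G"
proof (cases "verts G = {}")
  case True
  then have "edges G = {}" using G unfolding simple_graph_def by blast
  then have "chromatic_index G = 0"
    using chromatic_index_le[of G 0] unfolding proper_edge_colouring_def by blast
  then show ?thesis using True unfolding class1_def max_degree_def by simp
next
  case False
  then obtain v where v: "v \<in> verts G" by blast
  obtain c' where "proper_edge_colouring G (chromatic_index G) c'"
    using proper_edge_colouring_chromatic_index[OF G] .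
  then have "d \<le> chromatic_index G"
    using degree_le_colours[of G _ c' v] \<open>regular G d\<close> v unfolding regular_def by metis
  moreover have "chromatic_index G \<le> d" using chromatic_index_le assms(3) .
  ultimately show ?thesis
    using max_degree_regular[OF \<open>regular G d\<close> False] unfolding class1_def by simp
qed

lemma class1_edge_colouring:
  assumes "simple_graph G" "class1 G"
  obtains c where "proper_edge_colouring G (max_degree G) c"
  using proper_edge_colouring_chromatic_index[OF assms(1)] assms(2)
  unfolding class1_def by metis

section \<open>Weak retractions and distance\<close>

definition weak_hom :: "'a graph \<Rightarrow> 'b graph \<Rightarrow> ('a \<Rightarrow> 'b) \<Rightarrow> bool" where
  "weak_hom A B h \<longleftrightarrow> h ` verts A \<subseteq> verts B \<and>
     (\<forall>p q. {p, q} \<in> edges A \<longrightarrow> h p = h q \<or> {h p, h q} \<in> edges B)"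

lemma walk_of_length_0_iff: "walk_of_length G x y 0 \<longleftrightarrow> x = y"
  unfolding walk_of_length_def by auto

lemma walk_of_length_snoc:
  assumes "walk_of_length G x y n" "{y, z} \<in> edges G"
  shows "walk_of_length G x z (Suc n)"
proof -
  obtain p where p: "p 0 = x" "p n = y" "\<forall>i<n. {p i, p (Suc i)} \<in> edges G"
    using assms(1) unfolding walk_of_length_def by blast
  define q where "q i = (if i \<le> n then p i else z)" for i
  have "\<forall>i<Suc n. {q i, q (Suc i)} \<in> edges G"
    using p assms(2) by (auto simp: q_def less_Suc_eq)
  moreover have "q 0 = x" "q (Suc n) = z" using p by (auto simp: q_def)
  ultimately show ?thesis unfolding walk_of_length_def by blast
qed

lemma walk_of_length_butlast:
  assumes "walk_of_length G x z (Suc n)"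
  obtains y where "walk_of_length G x y n" "{y, z} \<in> edges G"
proof -
  obtain p where p: "p 0 = x" "p (Suc n) = z" "\<forall>i<Suc n. {p i, p (Suc i)} \<in> edges G"
    using assms unfolding walk_of_length_def by blast
  then have "walk_of_length G x (p n) n" unfolding walk_of_length_def by auto
  with p show thesis using that by auto
qed

lemma walk_of_length_weak_hom:
  assumes h: "weak_hom A B h"
  shows "walk_of_length A x y n \<Longrightarrow> \<exists>m\<le>n. walk_of_length B (h x) (h y) m"
proof (induction n arbitrary: y)
  case 0
  then show ?case by (simp add: walk_of_length_0_iff)
next
  case (Suc n)
  then obtain z where z: "walk_of_length A x z n" "{z, y} \<in> edges A"
    by (blast elim: walk_of_length_butlast)
  obtain m where m: "m \<le> n" "walk_of_length B (h x) (h z) m" using Suc.IH[OF z(1)] by blast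
  have "h z = h y \<or> {h z, h y} \<in> edges B" using h z(2) unfolding weak_hom_def by blast
  then show ?case
    using m walk_of_length_snoc[OF m(2)] by (metis Suc_le_mono le_Suc_eq)
qed

lemma dist_weak_hom_le:
  assumes "weak_hom A B h"
  shows "dist B (h x) (h y) \<le> dist A x y"
  unfolding dist_def
proof (rule Inf_mono)
  fix d assume "d \<in> {enat n |n. walk_of_length A x y n}"
  then obtain n where "d = enat n" "walk_of_length A x y n" by blast
  moreover obtain m where "m \<le> n" "walk_of_length B (h x) (h y) m"
    using walk_of_length_weak_hom[OF assms \<open>walk_of_length A x y n\<close>] by blast
  ultimately show "\<exists>d'\<in>{enat n |n. walk_of_length B (h x) (h y) n}. d' \<le> d" by auto
qed

definition weak_retraction :: "'a graph \<Rightarrow> 'a graph \<Rightarrow> ('a \<Rightarrow> 'a) \<Rightarrow> bool" where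
  "weak_retraction H G r \<longleftrightarrow> weak_hom H G r \<and> (\<forall>v\<in>verts G. r v = v)"

lemma edge_dist_weak_retraction_le:
  assumes "weak_retraction H G r" "e \<subseteq> verts G" "f \<subseteq> verts G"
  shows "edge_dist G e f \<le> edge_dist H e f"
  unfolding edge_dist_def
proof (rule Inf_mono)
  fix d assume "d \<in> {dist H x z |x z. x \<in> e \<and> z \<in> f}"
  then obtain x z where xz: "d = dist H x z" "x \<in> e" "z \<in> f" by blast
  have "dist G (r x) (r z) \<le> dist H x z"
    using assms(1) dist_weak_hom_le[of H G r] unfolding weak_retraction_def by simp
  moreover have "r x = x" "r z = z" using assms xz(2,3) unfolding weak_retraction_def by blast+
  ultimately show "\<exists>d'\<in>{dist G x z |x z. x \<in> e \<and> z \<in> f}. d' \<le> d" using xz by fastforce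
qed

section \<open>Cartesian products\<close>

definition coordwise :: "(nat \<Rightarrow> 'a \<Rightarrow> 'b) \<Rightarrow> 'a list \<Rightarrow> 'b list" where
  "coordwise h xs = map (\<lambda>j. h j (xs ! j)) [0..<length xs]"

lemma length_coordwise [simp]: "length (coordwise h xs) = length xs"
  by (simp add: coordwise_def)

lemma nth_coordwise [simp]: "j < length xs \<Longrightarrow> coordwise h xs ! j = h j (xs ! j)"
  by (simp add: coordwise_def)

lemma verts_cart_prod:
  "verts (cart_prod k G) = {xs. length xs = k \<and> (\<forall>i<k. xs ! i \<in> verts (G i))}"
  by (simp add: cart_prod_def verts_def)

lemma edges_cart_prod:
  "edges (cart_prod k G) = {{xs, ys} | xs ys. xs \<in> verts (cart_prod k G) \<and> ys \<in> verts (cart_prod k G) \<and>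
     (\<exists>i<k. {xs ! i, ys ! i} \<in> edges (G i) \<and> (\<forall>j<k. j \<noteq> i \<longrightarrow> xs ! j = ys ! j))}"
  by (simp add: cart_prod_def edges_def verts_def conj_ac)

lemma edge_subset_verts_cart_prod: "e \<in> edges (cart_prod k G) \<Longrightarrow> e \<subseteq> verts (cart_prod k G)"
  unfolding edges_cart_prod by blast

lemma coordwise_cart_prod_edge:
  assumes "\<forall>i<k. weak_hom (H i) (G i) (h i)"
    and xs: "xs \<in> verts (cart_prod k H)" and ys: "ys \<in> verts (cart_prod k H)"
    and i: "i < k" "{xs ! i, ys ! i} \<in> edges (H i)" "\<forall>j<k. j \<noteq> i \<longrightarrow> xs ! j = ys ! j"
  shows "coordwise h xs = coordwise h ys \<or>
    {coordwise h xs, coordwise h ys} \<in> edges (cart_prod k G)"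
proof (cases "h i (xs ! i) = h i (ys ! i)")
  case True
  have "coordwise h xs ! j = coordwise h ys ! j" if "j < k" for j
    using True xs ys i(3) that by (cases "j = i") (auto simp: verts_cart_prod)
  then have "coordwise h xs = coordwise h ys"
    using xs ys by (intro nth_equalityI) (auto simp: verts_cart_prod)
  then show ?thesis ..
next
  case False
  then have "{h i (xs ! i), h i (ys ! i)} \<in> edges (G i)"
    using assms(1) i unfolding weak_hom_def by blast
  moreover have "coordwise h zs \<in> verts (cart_prod k G)" if "zs \<in> verts (cart_prod k H)" for zs
    using that assms(1) by (auto simp: verts_cart_prod weak_hom_def image_subset_iff)
  moreover have "length xs = k" "length ys = k" using xs ys by (simp_all add: verts_cart_prod)
  ultimately have "coordwise h xs \<in> verts (cart_prod k G) \<and> coordwise h ys \<in> verts (cart_prod k G) \<and>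
      {coordwise h xs ! i, coordwise h ys ! i} \<in> edges (G i) \<and>
      (\<forall>j<k. j \<noteq> i \<longrightarrow> coordwise h xs ! j = coordwise h ys ! j)"
    using xs ys i by simp
  then have "{coordwise h xs, coordwise h ys} \<in> edges (cart_prod k G)"
    unfolding edges_cart_prod using i(1) by blast
  then show ?thesis ..
qed

lemma weak_hom_cart_prod:
  assumes "\<forall>i<k. weak_hom (H i) (G i) (h i)"
  shows "weak_hom (cart_prod k H) (cart_prod k G) (coordwise h)"
  unfolding weak_hom_def
proof (intro conjI allI impI)
  show "coordwise h ` verts (cart_prod k H) \<subseteq> verts (cart_prod k G)"
    using assms by (auto simp: verts_cart_prod weak_hom_def image_subset_iff)
next
  fix p q assume "{p, q} \<in> edges (cart_prod k H)"
  then obtain xs ys i where pq: "{p, q} = {xs, ys}"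
    and edge: "xs \<in> verts (cart_prod k H)" "ys \<in> verts (cart_prod k H)"
      "i < k" "{xs ! i, ys ! i} \<in> edges (H i)" "\<forall>j<k. j \<noteq> i \<longrightarrow> xs ! j = ys ! j"
    unfolding edges_cart_prod by blast
  from pq have "p = xs \<and> q = ys \<or> p = ys \<and> q = xs" by (auto simp: doubleton_eq_iff)
  with coordwise_cart_prod_edge[OF assms edge]
  show "coordwise h p = coordwise h q \<or> {coordwise h p, coordwise h q} \<in> edges (cart_prod k G)"
    by (auto simp: insert_commute)
qed

lemma coordwise_eq_self:
  assumes "\<forall>i<k. \<forall>v\<in>verts (G i). h i v = v" "xs \<in> verts (cart_prod k G)"
  shows "coordwise h xs = xs"
  using assms by (intro nth_equalityI) (auto simp: verts_cart_prod)

lemma weak_retraction_cart_prod: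
  assumes "\<forall>i<k. weak_retraction (H i) (G i) (r i)"
  shows "weak_retraction (cart_prod k H) (cart_prod k G) (coordwise r)"
  unfolding weak_retraction_def
proof
  show "weak_hom (cart_prod k H) (cart_prod k G) (coordwise r)"
    using assms unfolding weak_retraction_def by (blast intro: weak_hom_cart_prod)
  show "\<forall>xs\<in>verts (cart_prod k G). coordwise r xs = xs"
    using assms coordwise_eq_self unfolding weak_retraction_def by blast
qed

section \<open>A regular Class 1 supergraph\<close>

lemma xor_pow2_less: "(s::nat) < 2 ^ D \<Longrightarrow> a < D \<Longrightarrow> s XOR 2 ^ a < 2 ^ D"
  by (metis take_bit_xor take_bit_nat_eq_self_iff power_strict_increasing_iff one_less_numeral_iff semiring_norm(76))

lemma xor_pow2_xor_pow2 [simp]: "((s::nat) XOR 2 ^ a) XOR 2 ^ a = s"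
  by (simp add: xor.assoc)

lemma xor_xor_pow2 [simp]: "(s::nat) XOR (s XOR 2 ^ a) = 2 ^ a"
  by (simp add: xor.assoc[symmetric])

lemma xor_pow2_xor [simp]: "((s::nat) XOR 2 ^ a) XOR s = 2 ^ a"
  by (metis xor_xor_pow2 xor.commute)

lemma xor_pow2_neq [simp]: "(s::nat) XOR 2 ^ a \<noteq> s" "s \<noteq> s XOR 2 ^ a"
  by (metis xor_xor_pow2 xor_self_eq power_not_zero zero_neq_numeral)+

definition missing_colour :: "'a graph \<Rightarrow> ('a set \<Rightarrow> nat) \<Rightarrow> 'a \<Rightarrow> nat \<Rightarrow> bool" where
  "missing_colour G c v a \<longleftrightarrow> (\<forall>e\<in>edges G. v \<in> e \<longrightarrow> c e \<noteq> a)"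

text \<open>Copy \<open>s\<close> of vertex \<open>v\<close> is the number \<open>v + N * s\<close>, where \<open>N\<close> exceeds every vertex of \<open>G\<close>.\<close>

definition copy_edges :: "nat \<Rightarrow> nat \<Rightarrow> nat graph \<Rightarrow> nat set set" where
  "copy_edges N D G = {(\<lambda>x. x + N * s) ` e | e s. e \<in> edges G \<and> s < 2 ^ D}"

definition cube_edges :: "nat \<Rightarrow> nat \<Rightarrow> (nat set \<Rightarrow> nat) \<Rightarrow> nat graph \<Rightarrow> nat set set" where
  "cube_edges N D c G = {{v + N * s, v + N * (s XOR 2 ^ a)} | v s a.
     v \<in> verts G \<and> s < 2 ^ D \<and> a < D \<and> missing_colour G c v a}"

definition completion :: "nat \<Rightarrow> nat \<Rightarrow> (nat set \<Rightarrow> nat) \<Rightarrow> nat graph \<Rightarrow> nat graph" where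
  "completion N D c G =
     ({v + N * s | v s. v \<in> verts G \<and> s < 2 ^ D}, copy_edges N D G \<union> cube_edges N D c G)"

text \<open>A cube edge collapses to a single vertex modulo \<open>N\<close>, so it falls into the second branch, which
  reads off the bit in which the copy indices of its ends differ.\<close>

definition completion_colouring :: "nat \<Rightarrow> (nat set \<Rightarrow> nat) \<Rightarrow> nat graph \<Rightarrow> nat set \<Rightarrow> nat" where
  "completion_colouring N c G e =
     (if (\<lambda>x. x mod N) ` e \<in> edges G then c ((\<lambda>x. x mod N) ` e)
      else (THE a. \<exists>x\<in>e. \<exists>y\<in>e. x div N XOR y div N = 2 ^ a))"

lemma add_mult_eq_iff:
  "u < N \<Longrightarrow> v < N \<Longrightarrow> u + N * s = v + N * t \<longleftrightarrow> u = v \<and> s = (t::nat)"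
  by (metis add.commute add_right_cancel mod_mult_self2 mod_less mult_cancel_left not_less_zero)

locale edge_coloured_graph =
  fixes G :: "nat graph" and N D :: nat and c :: "nat set \<Rightarrow> nat"
  assumes simple: "simple_graph G"
    and verts_less: "\<forall>v\<in>verts G. v < N"
    and colouring: "proper_edge_colouring G D c"
begin

abbreviation H :: "nat graph" where "H \<equiv> completion N D c G"

lemma verts_completion: "verts H = {v + N * s | v s. v \<in> verts G \<and> s < 2 ^ D}"
  by (simp add: completion_def verts_def)

lemma edges_completion: "edges H = copy_edges N D G \<union> cube_edges N D c G"
  by (simp add: completion_def edges_def)

lemma completion_vertE:
  assumes "x \<in> verts H"
  obtains v s where "x = v + N * s" "v \<in> verts G" "s < 2 ^ D"
  using assms unfolding verts_completion by blast

lemma completion_edgeE: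
  assumes "e \<in> edges H"
  obtains g s where "e = (\<lambda>x. x + N * s) ` g" "g \<in> edges G" "s < 2 ^ D"
  | v s a where "e = {v + N * s, v + N * (s XOR 2 ^ a)}" "v \<in> verts G" "s < 2 ^ D" "a < D"
      "missing_colour G c v a"
  using assms unfolding edges_completion copy_edges_def cube_edges_def by blast

lemma completion_edge_atE:
  assumes "e \<in> edges H" "v \<in> verts G" "v + N * s \<in> e"
  obtains g where "e = (\<lambda>x. x + N * s) ` g" "g \<in> edges G" "v \<in> g"
  | a where "e = {v + N * s, v + N * (s XOR 2 ^ a)}" "a < D" "missing_colour G c v a"
  using assms(1)
proof (cases rule: completion_edgeE)
  case (1 g t)
  have "v + N * s \<in> (\<lambda>x. x + N * t) ` g" using 1(1) assms(3) by simp
  then obtain u where u: "u \<in> g" "v + N * s = u + N * t" by (rule imageE)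
  have "u \<in> verts G" using u(1) 1(2) edge_subset_verts[OF simple] by blast
  then have "v = u \<and> s = t" using u(2) add_mult_eq_iff verts_less assms(2) by simp
  then show thesis using that(1) 1 u(1) by blast
next
  case (2 w t a)
  have vw: "v < N" "w < N" using assms(2) 2(2) verts_less by blast+
  have "v + N * s = w + N * t \<or> v + N * s = w + N * (t XOR 2 ^ a)" using assms(3) 2(1) by simp
  then have "v = w" and "s = t \<or> s = t XOR 2 ^ a" by (simp_all only: add_mult_eq_iff[OF vw]) blast+
  then have "e = {v + N * s, v + N * (s XOR 2 ^ a)}"
  proof (elim disjE)
    assume "s = t" then show ?thesis using 2(1) \<open>v = w\<close> by simp
  next
    assume "s = t XOR 2 ^ a"
    then have "t = s XOR 2 ^ a" by simp
    then show ?thesis using 2(1) \<open>v = w\<close> by (simp add: insert_commute)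
  qed
  then show thesis by (rule that(2)) (use 2(4,5) \<open>v = w\<close> in simp_all)
qed

lemma simple_completion: "simple_graph H"
  unfolding simple_graph_def
proof (intro conjI ballI)
  show "finite (verts H)"
    unfolding verts_completion using simple unfolding simple_graph_def
    by (intro finite_image_set2) simp_all
next
  fix e assume "e \<in> edges H"
  then show "\<exists>u v. u \<noteq> v \<and> u \<in> verts H \<and> v \<in> verts H \<and> e = {u, v}"
  proof (cases rule: completion_edgeE)
    case (1 g s)
    then obtain u w where "u \<noteq> w" "u \<in> verts G" "w \<in> verts G" "g = {u, w}"
      using simple unfolding simple_graph_def by blast
    moreover have "u + N * s \<in> verts H" "w + N * s \<in> verts H"
      using calculation 1(3) unfolding verts_completion by blast+
    ultimately show ?thesis using 1(1) by (intro exI[of _ "u + N * s"] exI[of _ "w + N * s"]) simp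
  next
    case (2 v s a)
    have "v < N" using 2(2) verts_less by blast
    then have "v + N * s \<noteq> v + N * (s XOR 2 ^ a)" using add_mult_eq_iff by simp
    moreover have "v + N * s \<in> verts H" "v + N * (s XOR 2 ^ a) \<in> verts H"
      using 2 xor_pow2_less unfolding verts_completion by blast+
    ultimately show ?thesis using 2(1) by blast
  qed
qed

lemma subgraph_completion: "subgraph G H"
proof -
  have "v + N * 0 \<in> verts H" if "v \<in> verts G" for v
    using that unfolding verts_completion by fastforce
  moreover have "(\<lambda>x. x + N * 0) ` g \<in> edges H" if "g \<in> edges G" for g
    using that unfolding edges_completion copy_edges_def by fastforce
  ultimately show ?thesis unfolding subgraph_def by auto
qed

lemma mod_image_copy:
  assumes "g \<in> edges G"
  shows "(\<lambda>x. x mod N) ` (\<lambda>x. x + N * s) ` g = g"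
proof -
  have "\<forall>x\<in>g. x < N" using assms edge_subset_verts[OF simple] verts_less by blast
  then show ?thesis by (force simp: image_image)
qed

lemma completion_colouring_copy:
  assumes "g \<in> edges G"
  shows "completion_colouring N c G ((\<lambda>x. x + N * s) ` g) = c g"
  using assms mod_image_copy[OF assms] unfolding completion_colouring_def by simp

lemma completion_colouring_cube:
  assumes "v \<in> verts G"
  shows "completion_colouring N c G {v + N * s, v + N * (s XOR 2 ^ a)} = a"
proof -
  let ?e = "{v + N * s, v + N * (s XOR 2 ^ a)}"
  have v: "v < N" using assms verts_less by blast
  have "(\<lambda>x. x mod N) ` ?e = {v}" using v by simp
  then have not_copy: "(\<lambda>x. x mod N) ` ?e \<notin> edges G" using singleton_not_edge[OF simple] by simp
  have divs: "x div N = s \<or> x div N = s XOR 2 ^ a" if "x \<in> ?e" for x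
    using that v by auto
  have "(THE b. \<exists>x\<in>?e. \<exists>y\<in>?e. x div N XOR y div N = 2 ^ b) = a"
  proof (rule the_equality)
    show "\<exists>x\<in>?e. \<exists>y\<in>?e. x div N XOR y div N = 2 ^ a"
      using v by (intro bexI[of _ "v + N * s"] bexI[of _ "v + N * (s XOR 2 ^ a)"]) simp_all
  next
    fix b assume "\<exists>x\<in>?e. \<exists>y\<in>?e. x div N XOR y div N = 2 ^ b"
    then obtain x y where "x \<in> ?e" "y \<in> ?e" "x div N XOR y div N = 2 ^ b" by blast
    then have "(2::nat) ^ b = 0 \<or> (2::nat) ^ b = 2 ^ a" using divs by (metis xor_self_eq xor_pow2_xor xor_xor_pow2)
    then show "b = a" by simp
  qed
  with not_copy show ?thesis unfolding completion_colouring_def by simp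
qed

lemma proper_completion_colouring: "proper_edge_colouring H D (completion_colouring N c G)"
  unfolding proper_edge_colouring_def
proof (intro conjI ballI impI)
  fix e assume "e \<in> edges H"
  then show "completion_colouring N c G e < D"
  proof (cases rule: completion_edgeE)
    case (1 g s)
    then show ?thesis
      using colouring completion_colouring_copy unfolding proper_edge_colouring_def by simp
  next
    case (2 v s a)
    then show ?thesis using completion_colouring_cube by simp
  qed
next
  fix e f assume e: "e \<in> edges H" and f: "f \<in> edges H" and ef: "e \<noteq> f \<and> e \<inter> f \<noteq> {}"
  then obtain x where x: "x \<in> e" "x \<in> f" by blast
  then have "x \<in> verts H" using e edge_subset_verts[OF simple_completion] by blast
  then obtain v s where v: "x = v + N * s" "v \<in> verts G" by (rule completion_vertE)
  have xe: "v + N * s \<in> e" and xf: "v + N * s \<in> f" using x v(1) by simp_all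
  show "completion_colouring N c G e \<noteq> completion_colouring N c G f"
  proof (cases rule: completion_edge_atE[OF e v(2) xe])
    case e_copy: (1 g1)
    show ?thesis
    proof (cases rule: completion_edge_atE[OF f v(2) xf])
      case (1 g2)
      then have "g1 \<noteq> g2 \<and> g1 \<inter> g2 \<noteq> {}" using e_copy ef by auto
      then show ?thesis
        using colouring e_copy 1 completion_colouring_copy unfolding proper_edge_colouring_def by simp
    next
      case (2 a)
      then have "c g1 \<noteq> a" using e_copy unfolding missing_colour_def by blast
      then show ?thesis using e_copy 2 completion_colouring_copy completion_colouring_cube v(2) by simp
    qed
  next
    case e_cube: (2 a1)
    show ?thesis
    proof (cases rule: completion_edge_atE[OF f v(2) xf])
      case (1 g)
      then have "c g \<noteq> a1" using e_cube unfolding missing_colour_def by blast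
      then show ?thesis using e_cube 1 completion_colouring_copy completion_colouring_cube v(2) by simp
    next
      case (2 a2)
      then have "a1 \<noteq> a2" using e_cube ef by auto
      then show ?thesis using e_cube 2 completion_colouring_cube v(2) by simp
    qed
  qed
qed

lemma regular_completion: "regular H D"
  unfolding regular_def
proof
  fix x assume "x \<in> verts H"
  then obtain v s where x: "x = v + N * s" "v \<in> verts G" "s < 2 ^ D" by (rule completion_vertE)
  have "\<exists>e\<in>edges H. x \<in> e \<and> completion_colouring N c G e = a" if a: "a < D" for a
  proof (cases "missing_colour G c v a")
    case True
    let ?e = "{v + N * s, v + N * (s XOR 2 ^ a)}"
    have "?e \<in> cube_edges N D c G" unfolding cube_edges_def using x a True by blast
    then have "?e \<in> edges H" unfolding edges_completion by simp
    then show ?thesis using x completion_colouring_cube by (intro bexI[of _ ?e]) simp_all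
  next
    case False
    then obtain g where g: "g \<in> edges G" "v \<in> g" "c g = a" unfolding missing_colour_def by blast
    let ?e = "(\<lambda>y. y + N * s) ` g"
    have "?e \<in> copy_edges N D G" unfolding copy_edges_def using g x by blast
    then have "?e \<in> edges H" unfolding edges_completion by simp
    then show ?thesis using x g completion_colouring_copy by (intro bexI[of _ ?e]) simp_all
  qed
  then show "degree H x = D" by (rule degree_eq_colours[OF proper_completion_colouring, rule_format])
qed

lemma class1_completion: "class1 H"
  using simple_completion regular_completion proper_completion_colouring
  by (rule class1_regular_colourable)

lemma weak_hom_completion_mod: "weak_hom H G (\<lambda>x. x mod N)"
  unfolding weak_hom_def
proof (intro conjI allI impI subsetI)
  fix y assume "y \<in> (\<lambda>x. x mod N) ` verts H"
  then obtain x where "x \<in> verts H" "y = x mod N" by blast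
  moreover from \<open>x \<in> verts H\<close> obtain v s where "x = v + N * s" "v \<in> verts G"
    by (rule completion_vertE)
  ultimately show "y \<in> verts G" using verts_less by simp
next
  fix p q assume pq: "{p, q} \<in> edges H"
  then have "p \<in> verts H" using edge_subset_verts[OF simple_completion] by blast
  then obtain v s where p: "p = v + N * s" "v \<in> verts G" by (rule completion_vertE)
  have v: "v < N" using p(2) verts_less by blast
  have "v + N * s \<in> {p, q}" using p(1) by simp
  show "p mod N = q mod N \<or> {p mod N, q mod N} \<in> edges G"
  proof (cases rule: completion_edge_atE[OF pq p(2) \<open>v + N * s \<in> {p, q}\<close>])
    case (1 g)
    then have "(\<lambda>x. x mod N) ` {p, q} = g" using mod_image_copy[of g s] by simp
    then have "{p mod N, q mod N} = g" by simp
    then show ?thesis using 1(2) by simp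
  next
    case (2 a)
    then have "q = v + N * s \<or> q = v + N * (s XOR 2 ^ a)" by (auto simp: doubleton_eq_iff)
    then show ?thesis using p(1) v by auto
  qed
qed

end

lemma ex_regular_class1_supergraph:
  fixes G :: "nat graph"
  assumes "simple_graph G" "class1 G"
  shows "\<exists>H r. simple_graph H \<and> subgraph G H \<and> regular H (max_degree G) \<and> class1 H \<and>
    weak_retraction H G r"
proof -
  obtain c where c: "proper_edge_colouring G (max_degree G) c"
    using class1_edge_colouring[OF assms] .
  define N where "N = Suc (Max (insert 0 (verts G)))"
  have "finite (verts G)" using assms(1) unfolding simple_graph_def by blast
  then have "\<forall>v\<in>verts G. v < N" unfolding N_def by (simp add: le_imp_less_Suc)
  then interpret edge_coloured_graph G N "max_degree G" c
    using assms(1) c by unfold_locales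
  have "weak_retraction (completion N (max_degree G) c G) G (\<lambda>x. x mod N)"
    using weak_hom_completion_mod verts_less unfolding weak_retraction_def by simp
  then show ?thesis
    using simple_completion subgraph_completion regular_completion class1_completion by blast
qed

text \<open>The construction works for every \<open>k\<close>.\<close>
theorem lemma2:
  fixes k :: nat and G :: "nat \<Rightarrow> nat graph"
  assumes "k \<ge> 2"
    and "\<forall>i<k. simple_graph (G i) \<and> class1 (G i)"
  shows "\<exists>Gs :: nat \<Rightarrow> nat graph.
           (\<forall>i<k. simple_graph (Gs i) \<and> subgraph (G i) (Gs i) \<and>
                  regular (Gs i) (max_degree (G i)) \<and> class1 (Gs i)) \<and>
           (\<forall>e\<in>edges (cart_prod k G). \<forall>f\<in>edges (cart_prod k G).
              edge_dist (cart_prod k G) e f \<ge> 3 \<longrightarrow> edge_dist (cart_prod k Gs) e f \<ge> 3)"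
proof -
  have "\<forall>i<k. \<exists>H r. simple_graph H \<and> subgraph (G i) H \<and> regular H (max_degree (G i)) \<and>
      class1 H \<and> weak_retraction H (G i) r"
    using assms(2) ex_regular_class1_supergraph by blast
  then obtain Gs r where Gs: "\<forall>i<k. simple_graph (Gs i) \<and> subgraph (G i) (Gs i) \<and>
      regular (Gs i) (max_degree (G i)) \<and> class1 (Gs i) \<and> weak_retraction (Gs i) (G i) (r i)"
    by metis
  then have "weak_retraction (cart_prod k Gs) (cart_prod k G) (coordwise r)"
    by (simp add: weak_retraction_cart_prod)
  then have "edge_dist (cart_prod k G) e f \<le> edge_dist (cart_prod k Gs) e f"
    if "e \<in> edges (cart_prod k G)" "f \<in> edges (cart_prod k G)" for e f
    using that edge_subset_verts_cart_prod by (blast intro: edge_dist_weak_retraction_le)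
  with Gs show ?thesis by (intro exI[of _ Gs]) (meson order_trans)
qed

end
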